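(* Let $(a,b,c,\lambda,\delta)\in(\mathbb F^\times)^4\times\mathbb F$. If the $\triangle_q$-module $W_\lambda^\delta(a,b,c)$ is irreducible, then $\delta\ne0$ or $\lambda^2\notin\{q^{2i}: i=0,1,\dots,d'-2\}$.
   Context: $\mathbb F$ is an algebraically closed field and $q\in\mathbb F^\times$ a root of unity of order $d\notin\{1,2,4\}$; $d'=d$ if $d$ odd, $d'=d/2$ if $d$ even. $\triangle_q$ is the unital associative $\mathbb F$-algebra with generators $A,B,C$ subject to: each of $A+\frac{qBC-q^{-1}CB}{q^2-q^{-2}}$, $B+\frac{qCA-q^{-1}AC}{q^2-q^{-2}}$, $C+\frac{qAB-q^{-1}BA}{q^2-q^{-2}}$ is central; $\alpha,\beta,\gamma$ are these times $q+q^{-1}$. For $(a,b,c,\lambda)\in(\mathbb F^\times)^4$, $i\in\mathbb N$: $\theta_i=a\lambda^{-1}q^{2i}+a^{-1}\lambda q^{-2i}$, $\theta_i^*=b\lambda^{-1}q^{2i}+b^{-1}\lambda q^{-2i}$, $\varphi_i=a^{-1}b^{-1}\lambda q(q^i-q^{-i})(\lambda^{-1}q^{i-1}-\lambda q^{1-i})(q^{-i}-abc\lambda^{-1}q^{i-1})(q^{-i}-abc^{-1}\lambda^{-1}q^{i-1})$. $M_\lambda(a,b,c)$ has basis $\{m_i\}_{i\in\mathbb N}$, $(A-\theta_i)m_i=m_{i+1}$, $(B-\theta_i^* )m_i=\varphi_im_{i-1}$, $\alpha,\beta,\gamma$ acting as $(b+b^{-1})(c+c^{-1})+(a+a^{-1})(\lambda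 q+\lambda^{-1}q^{-1})$, $(c+c^{-1})(a+a^{-1})+(b+b^{-1})(\lambda q+\lambda^{-1}q^{-1})$, $(a+a^{-1})(b+b^{-1})+(c+c^{-1})(\lambda q+\lambda^{-1}q^{-1})$. $W_\lambda^\delta(a,b,c)$ is the quotient of $M_\lambda(a,b,c)$ by the span of $\{\delta m_i-m_{d'+i}\}_{i\in\mathbb N}$. *)

theory Defs
  imports "HOL-Computational_Algebra.Polynomial" "HOL-Library.Function_Algebras"
begin

definition alg_closed :: "'a::field itself \<Rightarrow> bool" where
  "alg_closed _ \<longleftrightarrow> (\<forall>p::'a poly. degree p > 0 \<longrightarrow> (\<exists>x. poly p x = 0))"

definition root_of_unity_order :: "'a::field \<Rightarrow> nat \<Rightarrow> bool" where
  "root_of_unity_order q d \<longleftrightarrow> d > 0 \<and> q ^ d = 1 \<and> (\<forall>k. 0 < k \<and> k < d \<longrightarrow> q ^ k \<noteq> 1)"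

definition dprime :: "nat \<Rightarrow> nat" where
  "dprime d = (if odd d then d else d div 2)"

definition theta :: "'a::field \<Rightarrow> 'a \<Rightarrow> 'a \<Rightarrow> nat \<Rightarrow> 'a" where
  "theta q a lam i = a * inverse lam * q powi (2 * int i) + inverse a * lam * q powi (- 2 * int i)"

definition thetas :: "'a::field \<Rightarrow> 'a \<Rightarrow> 'a \<Rightarrow> nat \<Rightarrow> 'a" where
  "thetas q b lam i = b * inverse lam * q powi (2 * int i) + inverse b * lam * q powi (- 2 * int i)"

definition phi :: "'a::field \<Rightarrow> 'a \<Rightarrow> 'a \<Rightarrow> 'a \<Rightarrow> 'a \<Rightarrow> nat \<Rightarrow> 'a" where
  "phi q a b c lam i = inverse a * inverse b * lam * q
     * (q powi int i - q powi (- int i))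
     * (inverse lam * q powi (int i - 1) - lam * q powi (1 - int i))
     * (q powi (- int i) - a * b * c * inverse lam * q powi (int i - 1))
     * (q powi (- int i) - a * b * inverse c * inverse lam * q powi (int i - 1))"

text \<open>The module M_lambda(a,b,c): finitely supported coefficient sequences
  v = sum_i v(i) m_i.\<close>
definition Mspace :: "(nat \<Rightarrow> 'a::field) set" where
  "Mspace = {v. finite {i. v i \<noteq> 0}}"

definition sc :: "'a::field \<Rightarrow> (nat \<Rightarrow> 'a) \<Rightarrow> (nat \<Rightarrow> 'a)" where
  "sc c v = (\<lambda>i. c * v i)"

definition mbas :: "nat \<Rightarrow> nat \<Rightarrow> 'a::field" where
  "mbas i = (\<lambda>j. if j = i then 1 else 0)"

text \<open>(A - theta_i) m_i = m_{i+1}\<close>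
definition opA :: "'a::field \<Rightarrow> 'a \<Rightarrow> 'a \<Rightarrow> (nat \<Rightarrow> 'a) \<Rightarrow> (nat \<Rightarrow> 'a)" where
  "opA q a lam v = (\<lambda>j. theta q a lam j * v j + (if j = 0 then 0 else v (j - 1)))"

text \<open>(B - theta*_i) m_i = phi_i m_{i-1}  (phi_0 = 0)\<close>
definition opB :: "'a::field \<Rightarrow> 'a \<Rightarrow> 'a \<Rightarrow> 'a \<Rightarrow> 'a \<Rightarrow> (nat \<Rightarrow> 'a) \<Rightarrow> (nat \<Rightarrow> 'a)" where
  "opB q a b c lam v = (\<lambda>j. thetas q b lam j * v j + phi q a b c lam (Suc j) * v (Suc j))"

definition gammaval :: "'a::field \<Rightarrow> 'a \<Rightarrow> 'a \<Rightarrow> 'a \<Rightarrow> 'a \<Rightarrow> 'a" where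
  "gammaval q a b c lam = (a + inverse a) * (b + inverse b) + (c + inverse c) * (lam * q + inverse lam * inverse q)"

text \<open>C is determined by the relation: C + (qAB - q^{-1}BA)/(q^2-q^{-2}) is central and
  acts as gamma/(q+q^{-1}).\<close>
definition opC :: "'a::field \<Rightarrow> 'a \<Rightarrow> 'a \<Rightarrow> 'a \<Rightarrow> 'a \<Rightarrow> (nat \<Rightarrow> 'a) \<Rightarrow> (nat \<Rightarrow> 'a)" where
  "opC q a b c lam v = (\<lambda>j. gammaval q a b c lam / (q + inverse q) * v j
     - (q * opA q a lam (opB q a b c lam v) j - inverse q * opB q a b c lam (opA q a lam v) j)
       / (q ^ 2 - inverse q ^ 2))"

text \<open>Triangle_q-submodules of M_lambda(a,b,c) (the central elements alpha, beta, gamma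
  act as scalars, so invariance under A, B, C suffices).\<close>
definition is_submodule :: "'a::field \<Rightarrow> 'a \<Rightarrow> 'a \<Rightarrow> 'a \<Rightarrow> 'a \<Rightarrow> (nat \<Rightarrow> 'a) set \<Rightarrow> bool" where
  "is_submodule q a b c lam U \<longleftrightarrow> U \<subseteq> Mspace \<and> module.subspace sc U \<and>
     (\<forall>v\<in>U. opA q a lam v \<in> U \<and> opB q a b c lam v \<in> U \<and> opC q a b c lam v \<in> U)"

definition Nsub :: "nat \<Rightarrow> 'a::field \<Rightarrow> (nat \<Rightarrow> 'a) set" where
  "Nsub d' \<delta> = module.span sc {(\<lambda>j. \<delta> * mbas i j - mbas (d' + i) j) | i. True}"

text \<open>W = M / N is irreducible: it is nonzero and, by the correspondence theorem, its
  submodules correspond to the submodules of M containing N.\<close>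
definition W_irreducible :: "'a::field \<Rightarrow> nat \<Rightarrow> 'a \<Rightarrow> 'a \<Rightarrow> 'a \<Rightarrow> 'a \<Rightarrow> 'a \<Rightarrow> bool" where
  "W_irreducible q d' a b c lam \<delta> \<longleftrightarrow>
     Nsub d' \<delta> \<noteq> Mspace \<and>
     (\<forall>U. is_submodule q a b c lam U \<and> Nsub d' \<delta> \<subseteq> U \<longrightarrow> U = Nsub d' \<delta> \<or> U = Mspace)"

end

theory Submission
  imports Defs
begin

text \<open>If \<open>\<delta> = 0\<close> and \<open>\<lambda>\<^sup>2 = q\<^sup>2\<^sup>i\<close>, then the factor \<open>\<lambda>\<^sup>-\<^sup>1q\<^sup>i - \<lambda>q\<^sup>-\<^sup>i\<close> of \<open>\<phi>\<^sub>i\<^sub>+\<^sub>1\<close> vanishes, so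
  \<open>B\<close> no longer lowers \<open>m\<^sub>i\<^sub>+\<^sub>1\<close> to \<open>m\<^sub>i\<close> and the span of the \<open>m\<^sub>j\<close> with \<open>j > i\<close> is a submodule
  of \<open>M\<^sub>\<lambda>(a,b,c)\<close>. For \<open>\<delta> = 0\<close> the kernel of \<open>M \<rightarrow> W\<close> is the span of the \<open>m\<^sub>j\<close> with \<open>j \<ge> d'\<close>;
  as \<open>i + 1 < d'\<close> it lies strictly inside that submodule, which in turn misses \<open>m\<^sub>0\<close>.
  Its image is therefore a nonzero proper submodule of \<open>W\<close>.\<close>

interpretation seq: module "sc :: 'a::field \<Rightarrow> (nat \<Rightarrow> 'a) \<Rightarrow> nat \<Rightarrow> 'a"
  by unfold_locales (auto simp: sc_def fun_eq_iff algebra_simps)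

lemma subspace_Mspace: "seq.subspace (Mspace :: (nat \<Rightarrow> 'a::field) set)"
proof (rule seq.subspaceI)
  fix x y :: "nat \<Rightarrow> 'a" assume "x \<in> Mspace" "y \<in> Mspace"
  moreover have "{j. (x + y) j \<noteq> 0} \<subseteq> {j. x j \<noteq> 0} \<union> {j. y j \<noteq> 0}" by auto
  ultimately show "x + y \<in> Mspace" by (auto simp: Mspace_def intro: finite_subset)
qed (auto simp: Mspace_def sc_def)

lemma mbas_in_Mspace: "(mbas k :: nat \<Rightarrow> 'a::field) \<in> Mspace"
proof -
  have "{j. (mbas k :: nat \<Rightarrow> 'a) j \<noteq> 0} \<subseteq> {k}" by (auto simp: mbas_def)
  then show ?thesis by (auto simp: Mspace_def intro: finite_subset)
qed

lemma opA_in_Mspace: "v \<in> Mspace \<Longrightarrow> opA q a lam v \<in> Mspace"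
proof -
  assume v: "v \<in> Mspace"
  have "j \<in> {j. v j \<noteq> 0} \<union> Suc ` {j. v j \<noteq> 0}" if "opA q a lam v j \<noteq> 0" for j
    using that by (cases j) (auto simp: opA_def)
  then have "{j. opA q a lam v j \<noteq> 0} \<subseteq> {j. v j \<noteq> 0} \<union> Suc ` {j. v j \<noteq> 0}"
    by blast
  with v show ?thesis by (auto simp: Mspace_def intro: finite_subset)
qed

lemma opB_in_Mspace: "v \<in> Mspace \<Longrightarrow> opB q a b c lam v \<in> Mspace"
proof -
  assume v: "v \<in> Mspace"
  then have "finite ({j. v j \<noteq> 0} \<union> Suc -` {j. v j \<noteq> 0})"
    by (intro finite_UnI finite_vimageI) (simp_all add: Mspace_def)
  moreover have "{j. opB q a b c lam v j \<noteq> 0} \<subseteq> {j. v j \<noteq> 0} \<union> Suc -` {j. v j \<noteq> 0}"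
    by (auto simp: opB_def)
  ultimately show ?thesis by (simp add: Mspace_def finite_subset)
qed

text \<open>\<open>C\<close> is a linear combination of \<open>1\<close>, \<open>AB\<close> and \<open>BA\<close>.\<close>

lemma is_submoduleI:
  assumes "U \<subseteq> Mspace" and U: "seq.subspace U"
    and A: "\<And>v. v \<in> U \<Longrightarrow> opA q a lam v \<in> U"
    and B: "\<And>v. v \<in> U \<Longrightarrow> opB q a b c lam v \<in> U"
  shows "is_submodule q a b c lam U"
proof -
  have "opC q a b c lam v \<in> U" if v: "v \<in> U" for v
  proof -
    let ?D = "q ^ 2 - inverse q ^ 2"
    have "opC q a b c lam v = sc (gammaval q a b c lam / (q + inverse q)) v
        + (sc (- q / ?D) (opA q a lam (opB q a b c lam v))
           + sc (inverse q / ?D) (opB q a b c lam (opA q a lam v)))"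
      by (simp add: opC_def sc_def fun_eq_iff diff_divide_distrib)
    also have "\<dots> \<in> U"
      using v A B by (intro seq.subspace_add seq.subspace_scale U) auto
    finally show ?thesis .
  qed
  with assms show ?thesis by (auto simp: is_submodule_def)
qed

definition vanishing_below :: "nat \<Rightarrow> (nat \<Rightarrow> 'a::field) set" where
  "vanishing_below n = {v \<in> Mspace. \<forall>j<n. v j = 0}"

lemma vanishing_below_antimono: "n \<le> m \<Longrightarrow> vanishing_below m \<subseteq> vanishing_below n"
  by (auto simp: vanishing_below_def)

lemma mbas_in_vanishing_below_iff:
  "(mbas k :: nat \<Rightarrow> 'a::field) \<in> vanishing_below n \<longleftrightarrow> n \<le> k"
  using mbas_in_Mspace by (auto simp: vanishing_below_def mbas_def)

lemma subspace_vanishing_below: "seq.subspace (vanishing_below n)"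
proof -
  have "seq.subspace {v :: nat \<Rightarrow> 'a. \<forall>j<n. v j = 0}"
    by (auto simp: seq.subspace_def sc_def)
  then have "seq.subspace (Mspace \<inter> {v :: nat \<Rightarrow> 'a. \<forall>j<n. v j = 0})"
    by (intro seq.subspace_inter subspace_Mspace)
  then show ?thesis by (simp add: vanishing_below_def Int_def)
qed

lemma submodule_vanishing_below:
  fixes q a b c lam :: "'a::field"
  assumes "phi q a b c lam n = 0"
  shows "is_submodule q a b c lam (vanishing_below n)"
proof (rule is_submoduleI[OF _ subspace_vanishing_below])
  show "vanishing_below n \<subseteq> Mspace" by (auto simp: vanishing_below_def)
next
  fix v :: "nat \<Rightarrow> 'a" assume "v \<in> vanishing_below n"
  then show "opA q a lam v \<in> vanishing_below n"
    using opA_in_Mspace by (auto simp: vanishing_below_def opA_def)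
  have "opB q a b c lam v j = 0" if "j < n" for j
  proof (cases "Suc j < n")
    case False
    then have "Suc j = n" using \<open>j < n\<close> by simp
    with \<open>j < n\<close> \<open>v \<in> vanishing_below n\<close> assms show ?thesis
      by (simp add: vanishing_below_def opB_def)
  qed (use \<open>j < n\<close> \<open>v \<in> vanishing_below n\<close> in \<open>simp add: vanishing_below_def opB_def\<close>)
  with \<open>v \<in> vanishing_below n\<close> show "opB q a b c lam v \<in> vanishing_below n"
    using opB_in_Mspace by (auto simp: vanishing_below_def)
qed

lemma Nsub_zero_subset_vanishing_below:
  "Nsub d' (0 :: 'a::field) \<subseteq> vanishing_below d'"
  unfolding Nsub_def
proof (rule seq.span_minimal[OF _ subspace_vanishing_below])
  have "(- mbas (d' + i) :: nat \<Rightarrow> 'a) \<in> vanishing_below d'" for i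
    by (intro seq.subspace_neg subspace_vanishing_below) (simp add: mbas_in_vanishing_below_iff)
  then show "{(\<lambda>j. 0 * mbas i j - mbas (d' + i) j) | i. True} \<subseteq> (vanishing_below d' :: (nat \<Rightarrow> 'a) set)"
    by (auto simp: fun_Compl_def)
qed

lemma phi_Suc_eq_0:
  fixes q lam :: "'a::field"
  assumes "q \<noteq> 0" "lam \<noteq> 0" "lam ^ 2 = q ^ (2 * i)"
  shows "phi q a b c lam (Suc i) = 0"
proof -
  have "lam * lam = q ^ i * q ^ i"
    using assms(3) by (simp add: power2_eq_square power_mult power_mult_distrib)
  then have "inverse lam * q ^ i - lam * inverse (q ^ i) = 0"
    using assms(1,2) by (simp add: field_simps)
  then show ?thesis
    by (simp add: phi_def power_int_minus)
qed

lemma two_le_dprime: "0 < d \<Longrightarrow> d \<notin> {1, 2} \<Longrightarrow> 2 \<le> dprime d"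
  by (auto simp: dprime_def)

theorem lemma8p1:
  fixes q a b c lam \<delta> :: "'F::field" and d :: nat
  assumes "alg_closed TYPE('F)"
    and "root_of_unity_order q d" and "d \<notin> {1, 2, 4}"
    and "a \<noteq> 0" and "b \<noteq> 0" and "c \<noteq> 0" and "lam \<noteq> 0"
    and "W_irreducible q (dprime d) a b c lam \<delta>"
  shows "\<delta> \<noteq> 0 \<or> lam ^ 2 \<notin> {q ^ (2 * i) | i. i \<le> dprime d - 2}"
proof (rule ccontr)
  assume "\<not> ?thesis"
  then obtain i where "\<delta> = 0" "lam ^ 2 = q ^ (2 * i)" "i \<le> dprime d - 2"
    by auto
  have "0 < d" "q ^ d = 1"
    using assms(2) by (auto simp: root_of_unity_order_def)
  then have "q \<noteq> 0"
    by (metis less_irrefl power_0_left zero_neq_one)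
  have "Suc i < dprime d"
    using two_le_dprime[of d] \<open>0 < d\<close> assms(3) \<open>i \<le> dprime d - 2\<close> by auto
  define U :: "(nat \<Rightarrow> 'F) set" where "U = vanishing_below (Suc i)"
  have "is_submodule q a b c lam U"
    unfolding U_def using phi_Suc_eq_0[OF \<open>q \<noteq> 0\<close> assms(7) \<open>lam ^ 2 = q ^ (2 * i)\<close>]
    by (rule submodule_vanishing_below)
  moreover have "Nsub (dprime d) \<delta> \<subseteq> U"
    using Nsub_zero_subset_vanishing_below vanishing_below_antimono \<open>Suc i < dprime d\<close>
    unfolding U_def \<open>\<delta> = 0\<close> by (meson less_imp_le order_trans)
  moreover have "mbas (Suc i) \<in> U - Nsub (dprime d) \<delta>"
    using Nsub_zero_subset_vanishing_below[of "dprime d"] \<open>Suc i < dprime d\<close>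
    unfolding U_def \<open>\<delta> = 0\<close> by (auto simp: mbas_in_vanishing_below_iff)
  moreover have "mbas 0 \<in> Mspace - U"
    by (simp add: U_def mbas_in_Mspace mbas_in_vanishing_below_iff)
  ultimately show False
    using assms(8) unfolding W_irreducible_def by blast
qed

end
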